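(* Let $p\ge1$, $m=2p$, $j=\mathrm{diag}(I_p,-I_p)$, $n>0$. Let $A$ be an $n\times n$ matrix with $\det A\neq0$, $S_0=S_0^*$ an $n\times n$ matrix and $\Pi_0$ an $n\times m$ matrix with $AS_0-S_0A^*=i\Pi_0j\Pi_0^*$. Define for $k\ge0$ $$\Pi_{k+1}=\Pi_k+iA^{-1}\Pi_kj,\qquad S_{k+1}=S_k+A^{-1}S_k(A^* )^{-1}+A^{-1}\Pi_k\Pi_k^*(A^* )^{-1}.$$ Suppose $\det S_r\neq0$ for $0\le r\le N$. Then the matrices $C_k=I_m+\Pi_k^*S_k^{-1}\Pi_k-\Pi_{k+1}^*S_{k+1}^{-1}\Pi_{k+1}$, $0\le k<N$, satisfy $C_k=C_k^*$ and $C_kjC_k=j$.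
   Context: $I_r$ denotes the $r\times r$ identity matrix. *)

theory Defs
  imports "HOL-Analysis.Analysis"
begin

definition adj :: "complex^'m^'n \<Rightarrow> complex^'n^'m" where
  "adj M = (\<chi> i k. cnj (M $ k $ i))"

text \<open>The signature matrix j = diag(I_p, -I_p); the index type of size m = 2p is 'p + 'p.\<close>
definition jmat :: "complex^('p::finite + 'p)^('p + 'p)" where
  "jmat = (\<chi> a b. if a = b then (case a of Inl _ \<Rightarrow> 1 | Inr _ \<Rightarrow> -1) else 0)"

fun PiS :: "complex^'n^'n \<Rightarrow> complex^'n^'n \<Rightarrow> complex^('p::finite + 'p)^'n \<Rightarrow> nat
            \<Rightarrow> (complex^('p + 'p)^'n) \<times> (complex^'n^'n)" where
  "PiS A S0 Pi0 0 = (Pi0, S0)"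
| "PiS A S0 Pi0 (Suc k) =
     (let (P, S) = PiS A S0 Pi0 k in
       (P + mat \<i> ** matrix_inv A ** P ** jmat,
        S + matrix_inv A ** S ** matrix_inv (adj A)
          + matrix_inv A ** P ** adj P ** matrix_inv (adj A)))"

definition Pik where "Pik A S0 Pi0 k = fst (PiS A S0 Pi0 k)"
definition Sk where "Sk A S0 Pi0 k = snd (PiS A S0 Pi0 k)"

end

theory Submission
  imports Defs
begin

text \<open>The recursion preserves both the hermiticity of \<open>S\<close> and the identity
\<open>A S - S A\<^sup>* = i \<Pi> j \<Pi>\<^sup>*\<close>. For every such triple the transfer matrix
\<open>w = I - i j \<Pi>\<^sup>* S\<^sup>-\<^sup>1 A\<^sup>-\<^sup>1 \<Pi>\<close>, the value at \<open>\<lambda> = 0\<close> of the transfer matrix function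
\<open>I - i j \<Pi>\<^sup>* S\<^sup>-\<^sup>1 (A - \<lambda> I)\<^sup>-\<^sup>1 \<Pi>\<close>, is \<open>j\<close>-unitary, and consecutive transfer
matrices are intertwined by \<open>C\<^sub>k\<close>: \<open>w\<^sub>k\<^sub>+\<^sub>1 j = j C\<^sub>k w\<^sub>k\<close>. Since \<open>C\<^sub>k\<close> is
Hermitian, taking adjoints gives \<open>w\<^sub>k\<^sup>* (C\<^sub>k j C\<^sub>k) w\<^sub>k = j = w\<^sub>k\<^sup>* j w\<^sub>k\<close>, and
\<open>w\<^sub>k\<close> is invertible.\<close>

definition scaleC_mat :: "complex \<Rightarrow> complex^'b^'a \<Rightarrow> complex^'b^'a" (infixr \<open>*\<^sub>C\<close> 75)
  where "c *\<^sub>C X = (\<chi> i k. c * X $ i $ k)"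

lemma mat_matrix_mul_eq_scaleC: "mat c ** X = c *\<^sub>C X"
  unfolding scaleC_mat_def matrix_matrix_mult_def mat_def
  by (auto simp: vec_eq_iff if_distrib if_distribR sum.delta' cong: if_cong)

lemma scaleC_matrix_mul_left: "(c *\<^sub>C X) ** Y = c *\<^sub>C (X ** Y)"
  by (simp add: scaleC_mat_def matrix_matrix_mult_def vec_eq_iff sum_distrib_left mult.assoc)

lemma scaleC_matrix_mul_right: "X ** (c *\<^sub>C Y) = c *\<^sub>C (X ** Y)"
  by (simp add: scaleC_mat_def matrix_matrix_mult_def vec_eq_iff sum_distrib_left mult_ac)

lemma scaleC_scaleC: "a *\<^sub>C b *\<^sub>C X = (a * b) *\<^sub>C X"
  by (simp add: scaleC_mat_def vec_eq_iff)

lemma scaleC_one: "1 *\<^sub>C X = X"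
  by (simp add: scaleC_mat_def vec_eq_iff)

lemma scaleC_minus_left: "(- c) *\<^sub>C X = - (c *\<^sub>C X)"
  by (simp add: scaleC_mat_def vec_eq_iff)

lemma scaleC_add_right: "c *\<^sub>C (X + Y) = c *\<^sub>C X + c *\<^sub>C Y"
  by (simp add: scaleC_mat_def vec_eq_iff algebra_simps)

lemma scaleC_diff_right: "c *\<^sub>C (X - Y) = c *\<^sub>C X - c *\<^sub>C Y"
  by (simp add: scaleC_mat_def vec_eq_iff algebra_simps)

lemma scaleC_minus_right: "c *\<^sub>C (- X) = - (c *\<^sub>C X)"
  by (simp add: scaleC_mat_def vec_eq_iff)

lemma matrix_add_rdistrib: "(X + Y) ** Z = X ** Z + Y ** Z"
  by (simp add: matrix_matrix_mult_def vec_eq_iff algebra_simps sum.distrib)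

lemma matrix_diff_ldistrib: "(X::'a::ring_1^'n^'m) ** (Y - Z) = X ** Y - X ** Z"
  by (simp add: matrix_matrix_mult_def vec_eq_iff algebra_simps sum_subtractf)

lemma matrix_diff_rdistrib: "((X::'a::ring_1^'n^'m) - Y) ** Z = X ** Z - Y ** Z"
  by (simp add: matrix_matrix_mult_def vec_eq_iff algebra_simps sum_subtractf)

lemma matrix_minus_left: "- (X::'a::ring_1^'n^'m) ** Y = - (X ** Y)"
  by (simp add: matrix_matrix_mult_def vec_eq_iff sum_negf)

lemma matrix_minus_right: "(X::'a::ring_1^'n^'m) ** (- Y) = - (X ** Y)"
  by (simp add: matrix_matrix_mult_def vec_eq_iff sum_negf)

lemma adj_matrix_mul: "adj (X ** Y) = adj Y ** adj X"
  by (simp add: adj_def matrix_matrix_mult_def vec_eq_iff mult.commute)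

lemma adj_add: "adj (X + Y) = adj X + adj Y"
  by (simp add: adj_def vec_eq_iff)

lemma adj_diff: "adj (X - Y) = adj X - adj Y"
  by (simp add: adj_def vec_eq_iff)

lemma adj_uminus: "adj (- X) = - adj X"
  by (simp add: adj_def vec_eq_iff)

lemma adj_scaleC: "adj (c *\<^sub>C X) = cnj c *\<^sub>C adj X"
  by (simp add: adj_def scaleC_mat_def vec_eq_iff)

lemma adj_adj: "adj (adj X) = X"
  by (simp add: adj_def vec_eq_iff)

lemma adj_mat: "adj (mat c) = mat (cnj c)"
  by (simp add: adj_def mat_def vec_eq_iff)

lemmas matrix_normalize =
  matrix_mul_assoc[symmetric] matrix_add_ldistrib matrix_add_rdistrib
  matrix_diff_ldistrib matrix_diff_rdistrib matrix_minus_left matrix_minus_right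
  mat_matrix_mul_eq_scaleC scaleC_matrix_mul_left scaleC_matrix_mul_right scaleC_scaleC scaleC_one
  scaleC_minus_left scaleC_add_right scaleC_diff_right scaleC_minus_right
  adj_matrix_mul adj_add adj_diff adj_uminus adj_scaleC adj_adj adj_mat

lemma matrix_mul_cancel_left: "X ** Y = mat 1 \<Longrightarrow> X ** (Y ** Z) = (Z::'a::semiring_1^_^_)"
  by (simp add: matrix_mul_assoc)

lemma invertible_matrix_inv:
  fixes X :: "'a::field^'n^'n"
  assumes "invertible X"
  shows "X ** matrix_inv X = mat 1" "matrix_inv X ** X = mat 1"
  using someI_ex[OF assms[unfolded invertible_def]] by (simp_all add: matrix_inv_def)

lemma matrix_inv_unique:
  fixes X Y :: "'a::field^'n^'n"
  assumes "X ** Y = mat 1"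
  shows "matrix_inv X = Y"
proof -
  have "invertible X" using assms invertible_right_inverse by blast
  then have "matrix_inv X = matrix_inv X ** (X ** Y)" by (simp add: assms)
  also have "\<dots> = Y" by (simp add: matrix_mul_assoc invertible_matrix_inv \<open>invertible X\<close>)
  finally show ?thesis .
qed

lemma adj_matrix_inv:
  fixes X :: "complex^'n^'n"
  assumes "invertible X"
  shows "adj (matrix_inv X) = matrix_inv (adj X)"
proof -
  have "adj X ** adj (matrix_inv X) = mat 1"
    using invertible_matrix_inv(2)[OF assms] by (metis adj_matrix_mul adj_mat complex_cnj_one)
  then show ?thesis by (simp add: matrix_inv_unique)
qed

lemma invertible_adj: "invertible (X::complex^'n^'n) \<Longrightarrow> invertible (adj X)"
  by (metis adj_mat adj_matrix_mul complex_cnj_one invertible_def)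

lemma matrix_inv_simps:
  fixes X :: "complex^'n^'n"
  assumes "invertible X"
  shows "X ** matrix_inv X = mat 1" "matrix_inv X ** X = mat 1"
    and "X ** (matrix_inv X ** Y) = Y" "matrix_inv X ** (X ** Y) = Y"
    and "adj (matrix_inv X) = matrix_inv (adj X)"
  using invertible_matrix_inv[OF assms] adj_matrix_inv[OF assms]
  by (simp_all add: matrix_mul_cancel_left)

lemma adj_jmat: "adj jmat = jmat"
  by (auto simp: adj_def jmat_def vec_eq_iff split: sum.splits)

lemma jmat_squared: "(jmat :: complex^('p::finite + 'p)^_) ** jmat = mat 1"
proof -
  have "(\<Sum>b\<in>UNIV. jmat $ a $ b * jmat $ b $ c) = (if a = c then 1 else (0::complex))" for a c :: "'p::finite + 'p"
  proof -
    have "(\<Sum>b\<in>UNIV. jmat $ a $ b * jmat $ b $ c) = (\<Sum>b\<in>UNIV. if b = a then jmat $ a $ a * jmat $ a $ c else 0)"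
      by (rule sum.cong) (auto simp: jmat_def)
    also have "\<dots> = (if a = c then 1 else 0)"
      by (cases a) (auto simp: jmat_def)
    finally show ?thesis .
  qed
  then show ?thesis
    by (simp add: matrix_matrix_mult_def mat_def vec_eq_iff)
qed

text \<open>Stated for right-nested products, the normal form of \<open>matrix_normalize\<close>, so that it
rewrites inside longer products.\<close>

lemma lyapunov_PJ_adjP:
  fixes A S :: "complex^'n^'n" and P :: "complex^'m^'n" and J :: "complex^'m^'m"
  assumes "A ** S - S ** adj A = mat \<i> ** P ** J ** adj P"
  shows "P ** (J ** adj P) = (- \<i>) *\<^sub>C (A ** S) + \<i> *\<^sub>C (S ** adj A)"
    and "P ** (J ** (adj P ** X)) = (- \<i>) *\<^sub>C (A ** (S ** X)) + \<i> *\<^sub>C (S ** (adj A ** X))"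
proof -
  have "P ** (J ** adj P) = (- \<i>) *\<^sub>C \<i> *\<^sub>C (P ** J ** adj P)"
    by (simp add: matrix_normalize)
  also have "\<dots> = (- \<i>) *\<^sub>C (A ** S - S ** adj A)"
    by (simp add: assms matrix_normalize)
  finally show *: "P ** (J ** adj P) = (- \<i>) *\<^sub>C (A ** S) + \<i> *\<^sub>C (S ** adj A)"
    by (simp add: matrix_normalize)
  show "P ** (J ** (adj P ** X)) = (- \<i>) *\<^sub>C (A ** (S ** X)) + \<i> *\<^sub>C (S ** (adj A ** X))"
    using arg_cong[OF *, of "\<lambda>M. M ** X"] by (simp add: matrix_normalize)
qed

lemma lyapunov_step:
  fixes A S S' :: "complex^'n^'n" and P P' :: "complex^'m^'n" and J :: "complex^'m^'m"
  assumes A: "invertible A" and J: "adj J = J" "J ** J = mat 1"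
    and "adj S = S" and lyap: "A ** S - S ** adj A = mat \<i> ** P ** J ** adj P"
    and P'_def: "P' = P + mat \<i> ** matrix_inv A ** P ** J"
    and S'_def: "S' = S + matrix_inv A ** S ** matrix_inv (adj A)
                  + matrix_inv A ** P ** adj P ** matrix_inv (adj A)"
  shows "adj S' = S'" and "A ** S' - S' ** adj A = mat \<i> ** P' ** J ** adj P'"
proof -
  note inv_simps = matrix_inv_simps[OF A] matrix_inv_simps[OF invertible_adj[OF A]]
    matrix_mul_cancel_left[OF J(2)]
  show "adj S' = S'"
    by (simp add: S'_def matrix_normalize inv_simps \<open>adj S = S\<close>)
  show "A ** S' - S' ** adj A = mat \<i> ** P' ** J ** adj P'"
    by (simp add: S'_def P'_def matrix_normalize J inv_simps lyapunov_PJ_adjP[OF lyap] algebra_simps)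
qed

lemma PiS_Suc:
  "Pik A S0 Pi0 (Suc k) = Pik A S0 Pi0 k + mat \<i> ** matrix_inv A ** Pik A S0 Pi0 k ** jmat"
  "Sk A S0 Pi0 (Suc k) = Sk A S0 Pi0 k + matrix_inv A ** Sk A S0 Pi0 k ** matrix_inv (adj A)
     + matrix_inv A ** Pik A S0 Pi0 k ** adj (Pik A S0 Pi0 k) ** matrix_inv (adj A)"
  by (simp_all add: Pik_def Sk_def split_def Let_def)

lemma Sk_hermitian_lyapunov:
  assumes "invertible A" and "adj S0 = S0"
    and "A ** S0 - S0 ** adj A = mat \<i> ** Pi0 ** jmat ** adj Pi0"
  shows "adj (Sk A S0 Pi0 k) = Sk A S0 Pi0 k \<and>
    A ** Sk A S0 Pi0 k - Sk A S0 Pi0 k ** adj A = mat \<i> ** Pik A S0 Pi0 k ** jmat ** adj (Pik A S0 Pi0 k)"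
proof (induction k)
  case 0
  show ?case using assms by (simp add: Pik_def Sk_def)
next
  case (Suc k)
  then show ?case
    using lyapunov_step[OF assms(1) adj_jmat jmat_squared _ _ PiS_Suc] by blast
qed

definition transfer_matrix ::
    "complex^'n^'n \<Rightarrow> complex^'n^'n \<Rightarrow> complex^'m^'n \<Rightarrow> complex^'m^'m \<Rightarrow> complex^'m^'m" where
  "transfer_matrix A S P J = mat 1 - mat \<i> ** J ** adj P ** matrix_inv S ** matrix_inv A ** P"

lemma transfer_matrix_J_unitary:
  fixes A S :: "complex^'n^'n" and P :: "complex^'m^'n" and J :: "complex^'m^'m"
  assumes A: "invertible A" and S: "invertible S" "adj S = S" and J: "adj J = J" "J ** J = mat 1"
    and lyap: "A ** S - S ** adj A = mat \<i> ** P ** J ** adj P"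
  shows "adj (transfer_matrix A S P J) ** J ** transfer_matrix A S P J = J"
  using adj_matrix_inv[OF S(1)]
  by (simp add: transfer_matrix_def matrix_normalize J S(2) lyapunov_PJ_adjP[OF lyap]
      matrix_inv_simps[OF A] matrix_inv_simps[OF invertible_adj[OF A]] matrix_inv_simps[OF S(1)]
      matrix_mul_cancel_left[OF J(2)] algebra_simps)

lemma transfer_matrix_step:
  fixes A S S' :: "complex^'n^'n" and P P' :: "complex^'m^'n" and J :: "complex^'m^'m"
  assumes A: "invertible A" and S: "invertible S" and S': "invertible S'"
    and J: "adj J = J" "J ** J = mat 1"
    and lyap: "A ** S - S ** adj A = mat \<i> ** P ** J ** adj P"
    and P'_def: "P' = P + mat \<i> ** matrix_inv A ** P ** J"
    and S'_def: "S' = S + matrix_inv A ** S ** matrix_inv (adj A)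
                  + matrix_inv A ** P ** adj P ** matrix_inv (adj A)"
  shows "transfer_matrix A S' P' J ** J
    = J ** (mat 1 + adj P ** matrix_inv S ** P - adj P' ** matrix_inv S' ** P') ** transfer_matrix A S P J"
proof -
  note inv_simps = matrix_inv_simps[OF A] matrix_inv_simps[OF invertible_adj[OF A]]
    matrix_inv_simps[OF S] matrix_mul_cancel_left[OF J(2)] lyapunov_PJ_adjP[OF lyap]
  txt \<open>The \<open>S'\<^sup>-\<^sup>1\<close>-terms of \<open>j C w - w' j\<close> combine into \<open>j \<Pi>'\<^sup>* S'\<^sup>-\<^sup>1 X'\<close>, and
    \<open>X' = S' A\<^sup>* S\<^sup>-\<^sup>1 A\<^sup>-\<^sup>1 \<Pi>\<close>.\<close>
  define X' where "X' = P' - mat \<i> ** P' ** J ** adj P ** matrix_inv S ** matrix_inv A ** P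
                    - mat \<i> ** matrix_inv A ** P' ** J"
  have "X' = S' ** adj A ** matrix_inv S ** matrix_inv A ** P"
    unfolding X'_def P'_def S'_def by (simp add: matrix_normalize inv_simps J algebra_simps)
  then have S'_X': "matrix_inv S' ** X' = adj A ** matrix_inv S ** matrix_inv A ** P"
    by (simp add: matrix_normalize matrix_inv_simps[OF S'])
  have "J ** (mat 1 + adj P ** matrix_inv S ** P - adj P' ** matrix_inv S' ** P') ** transfer_matrix A S P J
      - transfer_matrix A S' P' J ** J
    = J ** (adj P ** matrix_inv S ** P - mat \<i> ** J ** adj P ** matrix_inv S ** matrix_inv A ** P
        - mat \<i> ** adj P ** matrix_inv S ** P ** J ** adj P ** matrix_inv S ** matrix_inv A ** P)
      - J ** adj P' ** (matrix_inv S' ** X')"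
    unfolding X'_def transfer_matrix_def by (simp add: matrix_normalize inv_simps algebra_simps)
  also have "\<dots> = 0"
    unfolding S'_X' P'_def by (simp add: matrix_normalize inv_simps J algebra_simps)
  finally show ?thesis by simp
qed

lemma J_unitary_of_intertwining:
  fixes C w w' J :: "complex^'m^'m"
  assumes J: "adj J = J" "J ** J = mat 1" and "adj C = C"
    and w: "adj w ** J ** w = J" and w': "adj w' ** J ** w' = J"
    and intertwine: "w' ** J = J ** C ** w"
  shows "C ** J ** C = J"
proof -
  have JJ: "X ** J ** J = X" for X :: "complex^'m^'m"
    by (simp add: J(2) flip: matrix_mul_assoc)
  have intertwine_adj: "J ** adj w' = adj w ** C ** J"
    using arg_cong[OF intertwine, of adj] by (simp add: adj_matrix_mul J \<open>adj C = C\<close> matrix_mul_assoc)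
  have "adj w ** (C ** J ** C) ** w = (adj w ** C ** J) ** J ** (J ** C ** w)"
    by (simp add: matrix_mul_assoc JJ)
  also have "\<dots> = J ** (adj w' ** J ** w') ** J"
    unfolding intertwine[symmetric] intertwine_adj[symmetric] by (simp add: matrix_mul_assoc)
  also have "\<dots> = adj w ** J ** w"
    by (simp add: w w' JJ)
  finally have eq: "adj w ** (C ** J ** C) ** w = adj w ** J ** w" .
  have "(J ** adj w ** J) ** w = mat 1"
    using w by (simp add: J(2) flip: matrix_mul_assoc)
  then have "invertible w"
    using invertible_left_inverse by blast
  show ?thesis
    using arg_cong[OF eq, of "\<lambda>M. matrix_inv (adj w) ** M ** matrix_inv w"]
    by (simp add: matrix_mul_assoc[symmetric] matrix_inv_simps[OF invertible_adj[OF \<open>invertible w\<close>]])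
       (simp add: matrix_mul_assoc matrix_inv_simps[OF \<open>invertible w\<close>])
qed

theorem proposition2p3:
  fixes A S0 :: "complex^'n^'n"
    and Pi0 :: "complex^('p::finite + 'p)^'n"
    and N :: nat
  assumes "det A \<noteq> 0"
    and "adj S0 = S0"
    and "A ** S0 - S0 ** adj A = mat \<i> ** Pi0 ** jmat ** adj Pi0"
    and "\<forall>r \<le> N. det (Sk A S0 Pi0 r) \<noteq> 0"
  shows "\<forall>k < N.
    (let C = mat 1 + adj (Pik A S0 Pi0 k) ** matrix_inv (Sk A S0 Pi0 k) ** Pik A S0 Pi0 k
             - adj (Pik A S0 Pi0 (Suc k)) ** matrix_inv (Sk A S0 Pi0 (Suc k)) ** Pik A S0 Pi0 (Suc k)
     in adj C = C \<and> C ** jmat ** C = jmat)"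
proof -
  have A: "invertible A"
    using assms(1) invertible_det_nz by blast
  note hermitian = Sk_hermitian_lyapunov[OF A assms(2,3), THEN conjunct1]
  note lyap = Sk_hermitian_lyapunov[OF A assms(2,3), THEN conjunct2]
  define C where "C k = mat 1 + adj (Pik A S0 Pi0 k) ** matrix_inv (Sk A S0 Pi0 k) ** Pik A S0 Pi0 k
    - adj (Pik A S0 Pi0 (Suc k)) ** matrix_inv (Sk A S0 Pi0 (Suc k)) ** Pik A S0 Pi0 (Suc k)" for k
  have "adj (C k) = C k \<and> C k ** jmat ** C k = jmat" if "k < N" for k
  proof
    have S: "invertible (Sk A S0 Pi0 k)" "invertible (Sk A S0 Pi0 (Suc k))"
      using assms(4) \<open>k < N\<close> by (simp_all add: invertible_det_nz)
    show "adj (C k) = C k"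
      by (simp add: C_def matrix_normalize adj_matrix_inv[OF S(1)] adj_matrix_inv[OF S(2)] hermitian)
    show "C k ** jmat ** C k = jmat"
      by (rule J_unitary_of_intertwining[OF adj_jmat jmat_squared \<open>adj (C k) = C k\<close>
          transfer_matrix_J_unitary[OF A S(1) hermitian adj_jmat jmat_squared lyap]
          transfer_matrix_J_unitary[OF A S(2) hermitian adj_jmat jmat_squared lyap]
          transfer_matrix_step[OF A S adj_jmat jmat_squared lyap PiS_Suc, folded C_def]])
  qed
  then show ?thesis
    by (simp add: C_def Let_def)
qed

end
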